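(* Let $G$ be a directed acyclic graph with edge partition into pages including three pages $\mathtt{Red}$, $\mathtt{Blue}$, $\mathtt{Green}$, and let $\pi$ be a valid ordering of $(G,P)$. Suppose $G$ contains distinct vertices $l,\alpha,\omega,a',b',c',h,a'',b'',c''$ and the edges $(l,\alpha),(l,\omega)\in\mathtt{Red}$; $(\alpha,a'),(\alpha,b'),(\omega,b'),(\omega,c')\in\mathtt{Blue}$; $(a',h),(b',h),(c',h)\in\mathtt{Green}$; and $(a',a''),(b',b''),(c',c'')\in\mathtt{Red}$. If $\pi(h)<\min(\pi(a''),\pi(b''),\pi(c''))$, then either $\pi(a'')<\pi(b'')<\pi(c'')$ or $\pi(c'')<\pi(b'')<\pi(a'')$.
   Context: For a DAG $G$ with a partition $P$ of its edges into pages, a valid ordering is a linear ordering $\pi$ of the vertices that is a topological order ($\pi(u)<\pi(v)$ for each edge $(u,v)$) and such that no two edges in the same page cross; edges with endpoints $p_1,q_1$ and $p_2,q_2$ (with $\pi(p_t)<\pi(q_t)$, all four distinct) cross iff $\pi(p_1)<\pi(p_2)<\pi(q_1)<\pi(q_2)$ or $\pi(p_2)<\pi(p_1)<\pi(q_2)<\pi(q_1)$. *)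

theory Defs
  imports Main
begin

definition dag :: "'v set \<Rightarrow> ('v \<times> 'v) set \<Rightarrow> bool" where
  "dag V E \<longleftrightarrow> finite V \<and> E \<subseteq> V \<times> V \<and> acyclic E"

definition edge_partition :: "('v \<times> 'v) set \<Rightarrow> ('v \<times> 'v) set set \<Rightarrow> bool" where
  "edge_partition E P \<longleftrightarrow> \<Union>P = E \<and> {} \<notin> P \<and> (\<forall>A\<in>P. \<forall>B\<in>P. A \<noteq> B \<longrightarrow> A \<inter> B = {})"

definition cross :: "('v \<Rightarrow> nat) \<Rightarrow> 'v \<times> 'v \<Rightarrow> 'v \<times> 'v \<Rightarrow> bool" where
  "cross \<pi> e1 e2 \<longleftrightarrow> (case e1 of (p1, q1) \<Rightarrow> case e2 of (p2, q2) \<Rightarrow>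
     distinct [p1, q1, p2, q2] \<and>
     ((\<pi> p1 < \<pi> p2 \<and> \<pi> p2 < \<pi> q1 \<and> \<pi> q1 < \<pi> q2) \<or>
      (\<pi> p2 < \<pi> p1 \<and> \<pi> p1 < \<pi> q2 \<and> \<pi> q2 < \<pi> q1)))"

definition valid_ordering :: "'v set \<Rightarrow> ('v \<times> 'v) set \<Rightarrow> ('v \<times> 'v) set set \<Rightarrow> ('v \<Rightarrow> nat) \<Rightarrow> bool" where
  "valid_ordering V E P \<pi> \<longleftrightarrow>
     inj_on \<pi> V \<and>
     (\<forall>(u, v)\<in>E. \<pi> u < \<pi> v) \<and>
     (\<forall>A\<in>P. \<forall>e1\<in>A. \<forall>e2\<in>A. \<not> cross \<pi> e1 e2)"

end

theory Submission
  imports Defs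
begin

text \<open>Two edges of one page cannot cross, so an edge of that page starting strictly inside
  another one must also end inside it. First, this forces b' between a' and c': if b' were
  extreme, one of the blue pairs (\<alpha>,b'),(\<omega>,c') or (\<alpha>,a'),(\<omega>,b') would cross, the latter
  after the red edges (l,\<omega>) and (a',a'') have pushed a' beyond \<omega>. Second, the red edges
  (a',a''), (b',b''), (c',c'') all span the position of h, so they are pairwise nested and
  their heads appear in the reverse order of their tails.\<close>

locale paged_dag_ordering =
  fixes V :: "'v set" and E :: "'v rel" and P :: "('v \<times> 'v) set set" and \<pi> :: "'v \<Rightarrow> nat"
  assumes dag: "dag V E"
    and partition: "edge_partition E P"
    and valid: "valid_ordering V E P \<pi>"
begin

lemma page_edge_vertices:
  assumes "A \<in> P" "(u, v) \<in> A"
  shows "u \<in> V" "v \<in> V"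
  using assms dag partition unfolding dag_def edge_partition_def by auto

lemma position_neq:
  assumes "x \<in> V" "y \<in> V" "x \<noteq> y"
  shows "\<pi> x \<noteq> \<pi> y"
  using valid assms unfolding valid_ordering_def by (auto dest: inj_onD)

lemma page_edge_less:
  assumes "A \<in> P" "(u, v) \<in> A"
  shows "\<pi> u < \<pi> v"
  using assms partition valid unfolding edge_partition_def valid_ordering_def by blast

lemma page_edges_nest:
  assumes "A \<in> P" "(p1, q1) \<in> A" "(p2, q2) \<in> A" "distinct [p1, q1, p2, q2]"
    and "\<pi> p1 < \<pi> p2" "\<pi> p2 < \<pi> q1"
  shows "\<pi> q2 < \<pi> q1"
proof -
  have "\<not> cross \<pi> (p1, q1) (p2, q2)"
    using assms(1-3) valid unfolding valid_ordering_def by blast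
  then have "\<not> \<pi> q1 < \<pi> q2"
    using assms(4-6) unfolding cross_def by auto
  moreover have "\<pi> q1 \<noteq> \<pi> q2"
    using position_neq page_edge_vertices[OF assms(1,2)] page_edge_vertices[OF assms(1,3)] assms(4)
    by simp
  ultimately show ?thesis by simp
qed

lemma middle_of_blue_fans:
  assumes pages: "Red \<in> P" "Blue \<in> P"
    and red: "(l, \<alpha>) \<in> Red" "(l, \<omega>) \<in> Red" "(a', a'') \<in> Red"
    and blue: "(\<alpha>, a') \<in> Blue" "(\<alpha>, b') \<in> Blue" "(\<omega>, b') \<in> Blue" "(\<omega>, c') \<in> Blue"
    and dist: "distinct [l, \<alpha>, \<omega>, a', b', c', a'']"
    and order: "\<pi> \<alpha> < \<pi> \<omega>" "\<pi> \<omega> < \<pi> a''"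
  shows "(\<pi> a' < \<pi> b' \<and> \<pi> b' < \<pi> c') \<or> (\<pi> c' < \<pi> b' \<and> \<pi> b' < \<pi> a')"
proof -
  have ab: "\<pi> a' \<noteq> \<pi> b'" and cb: "\<pi> c' \<noteq> \<pi> b'" and a\<omega>: "\<pi> a' \<noteq> \<pi> \<omega>"
    using position_neq page_edge_vertices[OF pages(2)] blue dist by auto
  have not_first: "\<not> (\<pi> b' < \<pi> a' \<and> \<pi> b' < \<pi> c')"
    using page_edges_nest[OF pages(2) blue(2) blue(4)] page_edge_less[OF pages(2) blue(3)]
      order(1) dist by auto
  have "\<pi> \<omega> < \<pi> a'"
  proof (rule ccontr)
    assume "\<not> \<pi> \<omega> < \<pi> a'"
    then have "\<pi> a' < \<pi> \<omega>" using a\<omega> by simp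
    moreover have "\<pi> l < \<pi> a'"
      using page_edge_less[OF pages(1) red(1)] page_edge_less[OF pages(2) blue(1)] by simp
    ultimately have "\<pi> a'' < \<pi> \<omega>"
      using page_edges_nest[OF pages(1) red(2) red(3)] dist by auto
    then show False using order(2) by simp
  qed
  then have not_last: "\<not> (\<pi> a' < \<pi> b' \<and> \<pi> c' < \<pi> b')"
    using page_edges_nest[OF pages(2) blue(1) blue(3)] order(1) dist by auto
  show ?thesis using not_first not_last ab cb by linarith
qed

end

theorem lemma1:
  fixes V :: "'v set" and E :: "'v rel" and P :: "('v \<times> 'v) set set"
    and Red Blue Green :: "('v \<times> 'v) set" and \<pi> :: "'v \<Rightarrow> nat"
    and l \<alpha> \<omega> a' b' c' h a'' b'' c'' :: 'v
  assumes "dag V E"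
    and "edge_partition E P"
    and "Red \<in> P" and "Blue \<in> P" and "Green \<in> P"
    and "Red \<noteq> Blue" and "Red \<noteq> Green" and "Blue \<noteq> Green"
    and "valid_ordering V E P \<pi>"
    and "distinct [l, \<alpha>, \<omega>, a', b', c', h, a'', b'', c'']"
    and "(l, \<alpha>) \<in> Red" and "(l, \<omega>) \<in> Red"
    and "(\<alpha>, a') \<in> Blue" and "(\<alpha>, b') \<in> Blue" and "(\<omega>, b') \<in> Blue" and "(\<omega>, c') \<in> Blue"
    and "(a', h) \<in> Green" and "(b', h) \<in> Green" and "(c', h) \<in> Green"
    and "(a', a'') \<in> Red" and "(b', b'') \<in> Red" and "(c', c'') \<in> Red"
    and "\<pi> h < min (\<pi> a'') (min (\<pi> b'') (\<pi> c''))"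
  shows "(\<pi> a'' < \<pi> b'' \<and> \<pi> b'' < \<pi> c'') \<or> (\<pi> c'' < \<pi> b'' \<and> \<pi> b'' < \<pi> a'')"
proof -
  interpret paged_dag_ordering V E P \<pi>
    using assms(1,2,9) by unfold_locales
  have tails_before_h: "\<pi> a' < \<pi> h" "\<pi> b' < \<pi> h" "\<pi> c' < \<pi> h"
    using page_edge_less assms(5,17-19) by blast+
  have heads_after_h: "\<pi> h < \<pi> a''" "\<pi> h < \<pi> b''" "\<pi> h < \<pi> c''"
    using assms(23) by auto
  have "\<pi> \<alpha> \<noteq> \<pi> \<omega>"
    using position_neq page_edge_vertices[OF assms(4)] assms(10,13,15) by simp
  then consider "\<pi> \<alpha> < \<pi> \<omega>" | "\<pi> \<omega> < \<pi> \<alpha>" by linarith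
  then have "(\<pi> a' < \<pi> b' \<and> \<pi> b' < \<pi> c') \<or> (\<pi> c' < \<pi> b' \<and> \<pi> b' < \<pi> a')"
  proof cases
    case 1
    have "\<pi> \<omega> < \<pi> a''"
      using page_edge_less[OF assms(4,16)] tails_before_h heads_after_h by linarith
    with 1 show ?thesis
      using middle_of_blue_fans[OF assms(3,4,11,12,20,13-16)] assms(10) by simp
  next
    case 2
    have "\<pi> \<alpha> < \<pi> c''"
      using page_edge_less[OF assms(4,13)] tails_before_h heads_after_h by linarith
    with 2 have "(\<pi> c' < \<pi> b' \<and> \<pi> b' < \<pi> a') \<or> (\<pi> a' < \<pi> b' \<and> \<pi> b' < \<pi> c')"
      using middle_of_blue_fans[OF assms(3,4,12,11,22,16,15,14,13)] assms(10) by auto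
    then show ?thesis by blast
  qed
  then show ?thesis
  proof
    assume "\<pi> a' < \<pi> b' \<and> \<pi> b' < \<pi> c'"
    then have "\<pi> b'' < \<pi> a''" "\<pi> c'' < \<pi> b''"
      using page_edges_nest[OF assms(3,20,21)] page_edges_nest[OF assms(3,21,22)]
        tails_before_h heads_after_h assms(10) by auto
    then show ?thesis by simp
  next
    assume "\<pi> c' < \<pi> b' \<and> \<pi> b' < \<pi> a'"
    then have "\<pi> b'' < \<pi> c''" "\<pi> a'' < \<pi> b''"
      using page_edges_nest[OF assms(3,22,21)] page_edges_nest[OF assms(3,21,20)]
        tails_before_h heads_after_h assms(10) by auto
    then show ?thesis by simp
  qed
qed

end
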